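(* Let $(X,\tau_\delta)_{\delta>0}$ be a Hilbert dilation system with $d=\dim X$, let $\mathcal E\subseteq X$ be an ellipsoid and $\epsilon\in(0,1/2)$. Then there exist closed intervals $J_1,\dots,J_d\subseteq(0,\infty)$ with $r(J_p)/l(J_p)\le\epsilon^{-2}$ for all $p$, such that $\tau_\delta\mathcal E$ is $\epsilon$-degenerate for every $\delta\in(0,\infty)\setminus\bigcup_{p=1}^dJ_p$.
   Context: Hilbert dilation system: $X$ a real Hilbert space of finite dimension $d$, $X=\bigoplus_{\nu=1}^mX_\nu$ orthogonal, $\tau_\delta|_{X_\nu}=\delta^{-\nu}\mathrm{id}$. An ellipsoid is a set $\{\sum_{i=1}^dc_i\sigma_iv_i:\sum c_i^2\le1\}$ with $\sigma_1\ge\dots\ge\sigma_d\ge0$ (principal axis lengths) and $\{v_i\}$ an orthonormal basis; it is $\epsilon$-degenerate if no principal axis length lies in $[\epsilon,\epsilon^{-1}]$. $l(J)\le r(J)$ denote the endpoints of an interval $J$. *)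

theory Defs
  imports "HOL-Analysis.Analysis"
begin

definition hilbert_dilation_system ::
  "nat \<Rightarrow> (nat \<Rightarrow> 'a::euclidean_space set) \<Rightarrow> (real \<Rightarrow> 'a \<Rightarrow> 'a) \<Rightarrow> bool" where
  "hilbert_dilation_system m Xs tau \<longleftrightarrow>
     (\<forall>\<nu>\<in>{1..m}. subspace (Xs \<nu>)) \<and>
     (\<forall>\<nu>\<in>{1..m}. \<forall>\<mu>\<in>{1..m}. \<nu> \<noteq> \<mu> \<longrightarrow> (\<forall>x\<in>Xs \<nu>. \<forall>y\<in>Xs \<mu>. x \<bullet> y = 0)) \<and>
     span (\<Union>\<nu>\<in>{1..m}. Xs \<nu>) = UNIV \<and>
     (\<forall>\<delta>>0. linear (tau \<delta>) \<and>
        (\<forall>\<nu>\<in>{1..m}. \<forall>x\<in>Xs \<nu>. tau \<delta> x = (1 / \<delta> ^ \<nu>) *\<^sub>R x))"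

definition ellipsoid_rep :: "'a::euclidean_space set \<Rightarrow> (nat \<Rightarrow> real) \<Rightarrow> (nat \<Rightarrow> 'a) \<Rightarrow> bool" where
  "ellipsoid_rep E \<sigma> v \<longleftrightarrow>
     (\<forall>i\<in>{1..DIM('a)}. \<forall>j\<in>{1..DIM('a)}. v i \<bullet> v j = (if i = j then 1 else 0)) \<and>
     (\<forall>i\<in>{1..DIM('a)}. \<forall>j\<in>{1..DIM('a)}. i \<le> j \<longrightarrow> \<sigma> j \<le> \<sigma> i) \<and>
     (\<forall>i\<in>{1..DIM('a)}. 0 \<le> \<sigma> i) \<and>
     E = {(\<Sum>i\<in>{1..DIM('a)}. (c i * \<sigma> i) *\<^sub>R v i) | c. (\<Sum>i\<in>{1..DIM('a)}. (c i)\<^sup>2) \<le> 1}"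

definition ellipsoid :: "'a::euclidean_space set \<Rightarrow> bool" where
  "ellipsoid E \<longleftrightarrow> (\<exists>\<sigma> v. ellipsoid_rep E \<sigma> v)"

definition eps_degenerate :: "real \<Rightarrow> 'a::euclidean_space set \<Rightarrow> bool" where
  "eps_degenerate \<epsilon> E \<longleftrightarrow>
     (\<exists>\<sigma> v. ellipsoid_rep E \<sigma> v \<and> (\<forall>i\<in>{1..DIM('a)}. \<sigma> i \<notin> {\<epsilon>..1/\<epsilon>}))"

end

theory Submission
  imports Defs
begin

text \<open>Write \<open>E = A(B)\<close> with \<open>B\<close> the unit ball and \<open>A\<close> linear. The principal axis lengths of
  \<open>\<tau>\<^sub>\<delta> E\<close> are the singular values \<open>s\<^sub>p(\<delta>)\<close> of \<open>\<tau>\<^sub>\<delta> \<circ> A\<close>, and by Courant-Fischer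
  \<open>s\<^sub>p(\<delta>)\<close> is a max-min of \<open>|A\<^sup>* \<tau>\<^sub>\<delta> y|\<close> over \<open>p\<close>-dimensional subspaces (each \<open>\<tau>\<^sub>\<delta>\<close> is
  self-adjoint). Since \<open>\<tau>\<^bsub>\<delta>'\<^esub> = \<tau>\<^sub>\<delta> \<circ> \<tau>\<^sub>t\<close> with \<open>t = \<delta>'/\<delta>\<close>, and \<open>\<tau>\<^sub>t\<close> shrinks norms by a
  factor \<open>1/t\<close> at least when \<open>t \<ge> 1\<close>, we get \<open>s\<^sub>p(\<delta>') \<le> (\<delta>/\<delta>') s\<^sub>p(\<delta>)\<close> for \<open>\<delta> \<le> \<delta>'\<close>.
  If \<open>s\<^sub>p(\<delta>)\<close> and \<open>s\<^sub>p(\<delta>')\<close> both lie in \<open>[\<epsilon>, 1/\<epsilon>]\<close>, this forces \<open>\<delta>'/\<delta> \<le> \<epsilon>\<^sup>-\<^sup>2\<close>, so the set of such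
  \<open>\<delta>\<close> lies in an interval \<open>J\<^sub>p\<close> with \<open>r(J\<^sub>p)/l(J\<^sub>p) \<le> \<epsilon>\<^sup>-\<^sup>2\<close>.\<close>

section \<open>Orthonormal families\<close>

definition orthonormal_on :: "'i set \<Rightarrow> ('i \<Rightarrow> 'a::real_inner) \<Rightarrow> bool" where
  "orthonormal_on I u \<longleftrightarrow> (\<forall>i\<in>I. \<forall>j\<in>I. u i \<bullet> u j = (if i = j then 1 else 0))"

lemma orthonormal_on_subset: "orthonormal_on I u \<Longrightarrow> J \<subseteq> I \<Longrightarrow> orthonormal_on J u"
  unfolding orthonormal_on_def by blast

lemma inner_sum_orthogonal_family:
  fixes f :: "'i \<Rightarrow> 'a::real_inner"
  assumes "finite I" "\<And>i j. i \<in> I \<Longrightarrow> j \<in> I \<Longrightarrow> f i \<bullet> f j = (if i = j then w i else 0)"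
  shows "(\<Sum>i\<in>I. a i *\<^sub>R f i) \<bullet> (\<Sum>j\<in>I. b j *\<^sub>R f j) = (\<Sum>i\<in>I. a i * b i * w i)"
proof -
  have "(\<Sum>i\<in>I. a i *\<^sub>R f i) \<bullet> (\<Sum>j\<in>I. b j *\<^sub>R f j) = (\<Sum>i\<in>I. \<Sum>j\<in>I. a i * b j * (f i \<bullet> f j))"
    unfolding inner_sum_left inner_sum_right by (subst sum.swap) (simp add: mult_ac)
  also have "\<dots> = (\<Sum>i\<in>I. \<Sum>j\<in>I. if j = i then a i * b i * w i else 0)"
    by (intro sum.cong refl) (auto simp: assms(2))
  finally show ?thesis
    using assms(1) by (simp add: sum.delta)
qed

lemma inner_sum_orthonormal:
  assumes "orthonormal_on I u" "finite I"
  shows "(\<Sum>i\<in>I. a i *\<^sub>R u i) \<bullet> (\<Sum>j\<in>I. b j *\<^sub>R u j) = (\<Sum>i\<in>I. a i * b i)"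
  using inner_sum_orthogonal_family[of I u "\<lambda>_. 1" a b] assms unfolding orthonormal_on_def by auto

lemma inner_sum_orthonormal_left:
  assumes "orthonormal_on I u" "finite I" "k \<in> I"
  shows "(\<Sum>i\<in>I. a i *\<^sub>R u i) \<bullet> u k = a k"
proof -
  have "(\<Sum>i\<in>I. a i *\<^sub>R u i) \<bullet> u k = (\<Sum>i\<in>I. if i = k then a i else 0)"
    unfolding inner_sum_left using assms unfolding orthonormal_on_def by (intro sum.cong) auto
  then show ?thesis
    using assms by (simp add: sum.delta')
qed

lemma norm_sum_orthonormal_le:
  assumes "orthonormal_on I u" "finite I" "(\<Sum>i\<in>I. (a i)\<^sup>2) \<le> 1"
  shows "norm (\<Sum>i\<in>I. a i *\<^sub>R u i) \<le> 1"
proof -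
  have "(norm (\<Sum>i\<in>I. a i *\<^sub>R u i))\<^sup>2 \<le> 1\<^sup>2"
    using inner_sum_orthonormal[OF assms(1,2), of a a] assms(3)
    by (simp add: dot_square_norm power2_eq_square)
  then show ?thesis
    by (rule power2_le_imp_le) simp
qed

lemma bessel_inequality:
  assumes "orthonormal_on I u" "finite I"
  shows "(\<Sum>i\<in>I. (x \<bullet> u i)\<^sup>2) \<le> x \<bullet> x"
proof -
  let ?s = "\<Sum>i\<in>I. (x \<bullet> u i) *\<^sub>R u i"
  have "?s \<bullet> ?s = (\<Sum>i\<in>I. (x \<bullet> u i)\<^sup>2)"
    using inner_sum_orthonormal[OF assms] by (simp add: power2_eq_square)
  moreover have "x \<bullet> ?s = (\<Sum>i\<in>I. (x \<bullet> u i)\<^sup>2)"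
    by (simp add: inner_sum_right power2_eq_square)
  moreover have "0 \<le> (x - ?s) \<bullet> (x - ?s)"
    by simp
  ultimately show ?thesis
    by (simp add: inner_diff_left inner_diff_right inner_commute)
qed

lemma orthonormal_on_inj: "orthonormal_on I u \<Longrightarrow> inj_on u I"
  unfolding orthonormal_on_def inj_on_def by (metis one_neq_zero)

lemma independent_orthonormal_on:
  assumes "orthonormal_on I u"
  shows "independent (u ` I)"
proof (rule pairwise_orthogonal_independent)
  show "pairwise orthogonal (u ` I)"
    using assms unfolding orthonormal_on_def pairwise_def orthogonal_def by auto
  show "0 \<notin> u ` I"
    using assms unfolding orthonormal_on_def by force
qed

lemma dim_image_orthonormal_on:
  assumes "orthonormal_on I u" "finite I"
  shows "dim (u ` I) = card I"
  using independent_orthonormal_on[OF assms(1)] orthonormal_on_inj[OF assms(1)]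
  by (simp add: dim_eq_card_independent card_image)

lemma span_orthonormal_on_repr:
  assumes "orthonormal_on I u" "finite I" "x \<in> span (u ` I)"
  obtains a where "x = (\<Sum>i\<in>I. a i *\<^sub>R u i)"
proof -
  from assms(3) obtain b where "x = (\<Sum>w\<in>u ` I. b w *\<^sub>R w)"
    using span_finite[of "u ` I"] assms(2) by auto
  also have "\<dots> = (\<Sum>i\<in>I. b (u i) *\<^sub>R u i)"
    using sum.reindex[OF orthonormal_on_inj[OF assms(1)], of "\<lambda>w. b w *\<^sub>R w"] by simp
  finally show ?thesis
    by (rule that)
qed

text \<open>Otherwise the orthogonal projection onto the span of the family would be injective on \<open>W\<close>.\<close>
lemma subspace_orthogonal_to_orthonormal_on:
  fixes u :: "'i \<Rightarrow> 'a::euclidean_space"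
  assumes "orthonormal_on I u" "finite I" "subspace W" "card I < dim W"
  obtains y where "y \<in> W" "y \<noteq> 0" "\<And>j. j \<in> I \<Longrightarrow> y \<bullet> u j = 0"
proof -
  define P where "P x = (\<Sum>j\<in>I. (x \<bullet> u j) *\<^sub>R u j)" for x
  have lin: "linear P"
    unfolding P_def
    by (rule linearI) (simp_all add: inner_add_left scaleR_add_left sum.distrib scaleR_sum_right)
  have "\<not> inj_on P (span W)"
  proof
    assume "inj_on P (span W)"
    then have "dim (P ` W) = dim W"
      by (rule dim_image_eq[OF lin])
    moreover have "P ` W \<subseteq> span (u ` I)"
      unfolding P_def by (auto intro!: span_sum intro: span_scale span_base)
    then have "dim (P ` W) \<le> card I"
      using dim_subset dim_image_orthonormal_on[OF assms(1,2)] dim_span by metis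
    ultimately show False
      using assms(4) by simp
  qed
  then obtain a b where ab: "a \<in> W" "b \<in> W" "a \<noteq> b" "P a = P b"
    using span_eq_iff[of W] assms(3) unfolding inj_on_def by metis
  show ?thesis
  proof (rule that)
    show "a - b \<in> W" "a - b \<noteq> 0"
      using ab assms(3) by (simp_all add: subspace_diff)
    fix j assume "j \<in> I"
    have "P (a - b) = 0"
      using ab lin by (simp add: linear_diff)
    moreover have "P (a - b) \<bullet> u j = (a - b) \<bullet> u j"
      unfolding P_def by (rule inner_sum_orthonormal_left[OF assms(1,2) \<open>j \<in> I\<close>])
    ultimately show "(a - b) \<bullet> u j = 0"
      by simp
  qed
qed

lemma orthonormal_on_expansion:
  fixes u :: "nat \<Rightarrow> 'a::euclidean_space"
  assumes "orthonormal_on {1..DIM('a)} u"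
  shows "y = (\<Sum>i\<in>{1..DIM('a)}. (y \<bullet> u i) *\<^sub>R u i)"
proof -
  have "span (u ` {1..DIM('a)}) = UNIV"
    using dim_image_orthonormal_on[OF assms] unfolding dim_eq_full[symmetric] by simp
  then obtain a where y: "y = (\<Sum>i\<in>{1..DIM('a)}. a i *\<^sub>R u i)"
    using span_orthonormal_on_repr[OF assms] by blast
  have "(\<Sum>i\<in>{1..DIM('a)}. (y \<bullet> u i) *\<^sub>R u i) = (\<Sum>i\<in>{1..DIM('a)}. a i *\<^sub>R u i)"
    using inner_sum_orthonormal_left[OF assms] unfolding y by (intro sum.cong refl) simp
  then show ?thesis
    using y by simp
qed

section \<open>Rayleigh quotients and singular values\<close>

lemma quadratic_nonpos_imp_linear_coeff_zero:
  fixes a b :: real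
  assumes "\<And>t. 2 * t * a + t\<^sup>2 * b \<le> 0"
  shows "a = 0"
proof (rule ccontr)
  assume "a \<noteq> 0"
  define c where "c = \<bar>b\<bar> + 1"
  have "0 < c" "-1 < b / c"
    unfolding c_def by (auto simp: divide_less_eq less_divide_eq)
  then have "0 < a\<^sup>2 / c * (2 + b / c)"
    using \<open>a \<noteq> 0\<close> by (intro mult_pos_pos divide_pos_pos) auto
  moreover have "2 * (a / c) * a + (a / c)\<^sup>2 * b = a\<^sup>2 / c * (2 + b / c)"
    by (simp add: power2_eq_square algebra_simps)
  ultimately show False
    using assms[of "a / c"] by linarith
qed

lemma rayleigh_max_exists:
  fixes f :: "'a::euclidean_space \<Rightarrow> 'b::euclidean_space"
  assumes "linear f" "subspace C" "y \<in> C" "y \<noteq> 0"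
  obtains w where "w \<in> C" "w \<bullet> w = 1" "\<And>x. x \<in> C \<Longrightarrow> f x \<bullet> f x \<le> (f w \<bullet> f w) * (x \<bullet> x)"
proof -
  define K where "K = C \<inter> sphere 0 1"
  have "compact K"
    unfolding K_def using assms(2) by (intro closed_Int_compact closed_subspace compact_sphere)
  moreover have "y /\<^sub>R norm y \<in> K"
    using assms(2-4) unfolding K_def by (auto simp: subspace_scale)
  moreover have "continuous_on K (\<lambda>x. f x \<bullet> f x)"
    using assms(1) unfolding linear_conv_bounded_linear by (intro continuous_intros linear_continuous_on)
  ultimately obtain w where w: "w \<in> K" and max: "\<And>x. x \<in> K \<Longrightarrow> f x \<bullet> f x \<le> f w \<bullet> f w"
    using continuous_attains_sup[of K "\<lambda>x. f x \<bullet> f x"] by blast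
  show ?thesis
  proof (rule that)
    show "w \<in> C" "w \<bullet> w = 1"
      using w unfolding K_def by (auto simp: dot_square_norm)
    fix x assume x: "x \<in> C"
    show "f x \<bullet> f x \<le> (f w \<bullet> f w) * (x \<bullet> x)"
    proof (cases "x = 0")
      case False
      have "x /\<^sub>R norm x \<in> K"
        using x False assms(2) unfolding K_def by (auto simp: subspace_scale)
      from max[OF this] have "(f x \<bullet> f x) / (norm x)\<^sup>2 \<le> f w \<bullet> f w"
        using assms(1) by (simp add: linear_scale power2_eq_square divide_inverse mult_ac)
      then show ?thesis
        using False by (simp add: dot_square_norm divide_le_eq mult_ac)
    qed (use assms(1) in \<open>simp add: linear_0\<close>)
  qed
qed

lemma rayleigh_max_stationary:
  fixes f :: "'a::euclidean_space \<Rightarrow> 'b::euclidean_space"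
  assumes "linear f" "subspace C" "w \<in> C" "z \<in> C"
    and "f w \<bullet> f w = lam * (w \<bullet> w)" "\<And>x. x \<in> C \<Longrightarrow> f x \<bullet> f x \<le> lam * (x \<bullet> x)"
  shows "(adjoint f (f w) - lam *\<^sub>R w) \<bullet> z = 0"
proof -
  have "adjoint f (f w) \<bullet> z = f w \<bullet> f z"
    by (simp add: adjoint_clauses[OF assms(1)])
  then have R: "(adjoint f (f w) - lam *\<^sub>R w) \<bullet> z = f w \<bullet> f z - lam * (w \<bullet> z)"
    by (simp add: inner_diff_left)
  have "2 * t * (f w \<bullet> f z - lam * (w \<bullet> z)) + t\<^sup>2 * (f z \<bullet> f z - lam * (z \<bullet> z)) \<le> 0" for t
  proof -
    have "w + t *\<^sub>R z \<in> C"
      using assms(2-4) by (simp add: subspace_add subspace_scale)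
    from assms(6)[OF this] have "f (w + t *\<^sub>R z) \<bullet> f (w + t *\<^sub>R z) \<le> lam * ((w + t *\<^sub>R z) \<bullet> (w + t *\<^sub>R z))" .
    moreover have "f (w + t *\<^sub>R z) = f w + t *\<^sub>R f z"
      using assms(1) by (simp add: linear_add linear_scale)
    ultimately show ?thesis
      using assms(5) by (simp add: inner_add_left inner_add_right inner_commute power2_eq_square algebra_simps)
  qed
  then show ?thesis
    unfolding R by (rule quadratic_nonpos_imp_linear_coeff_zero)
qed

text \<open>The residual \<open>f\<^sup>* f w - \<lambda> w\<close> is orthogonal to the complement by stationarity and to
  the \<open>u j\<close> by self-adjointness of \<open>f\<^sup>* f\<close>.\<close>
lemma rayleigh_max_eigenvector:
  fixes f :: "'a::euclidean_space \<Rightarrow> 'b::euclidean_space"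
  assumes "linear f" "orthonormal_on I u" "finite I"
    and eig: "\<And>j. j \<in> I \<Longrightarrow> adjoint f (f (u j)) = l j *\<^sub>R u j"
    and w: "\<forall>j\<in>I. w \<bullet> u j = 0" "f w \<bullet> f w = lam * (w \<bullet> w)"
    and max: "\<And>x. \<forall>j\<in>I. x \<bullet> u j = 0 \<Longrightarrow> f x \<bullet> f x \<le> lam * (x \<bullet> x)"
  shows "adjoint f (f w) = lam *\<^sub>R w"
proof -
  define C where "C = {x. \<forall>j\<in>I. x \<bullet> u j = 0}"
  define R where "R = adjoint f (f w) - lam *\<^sub>R w"
  have C: "subspace C"
    unfolding C_def subspace_def by (auto simp: inner_add_left)
  have RC: "R \<bullet> z = 0" if "z \<in> C" for z
    unfolding R_def using assms(1) C _ that w(2) max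
    by (rule rayleigh_max_stationary) (use w(1) C_def in auto)
  have Ru: "R \<bullet> u j = 0" if "j \<in> I" for j
  proof -
    have "adjoint f (f w) \<bullet> u j = w \<bullet> adjoint f (f (u j))"
      by (simp add: adjoint_clauses[OF assms(1)])
    then show ?thesis
      using eig[OF that] w(1) that by (simp add: R_def inner_diff_left)
  qed
  have "R \<bullet> z = 0" for z
  proof -
    define p where "p = (\<Sum>j\<in>I. (z \<bullet> u j) *\<^sub>R u j)"
    have "z - p \<in> C"
      unfolding C_def p_def using inner_sum_orthonormal_left[OF assms(2,3)] by (auto simp: inner_diff_left)
    moreover have "R \<bullet> p = 0"
      unfolding p_def using Ru by (simp add: inner_sum_right)
    ultimately show ?thesis
      using RC[of "z - p"] by (simp add: inner_diff_right)
  qed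
  then show ?thesis
    unfolding R_def by (metis inner_eq_zero_iff right_minus_eq)
qed

lemma rayleigh_max_on_complement:
  fixes f :: "'a::euclidean_space \<Rightarrow> 'b::euclidean_space"
  assumes "linear f" "orthonormal_on I u" "finite I" "card I < DIM('a)"
    and "\<forall>j\<in>I. adjoint f (f (u j)) = l j *\<^sub>R u j"
  obtains w lam where "w \<bullet> w = 1" "\<forall>j\<in>I. w \<bullet> u j = 0" "adjoint f (f w) = lam *\<^sub>R w"
    and "\<And>x. \<forall>j\<in>I. x \<bullet> u j = 0 \<Longrightarrow> f x \<bullet> f x \<le> lam * (x \<bullet> x)"
proof -
  define C where "C = {x. \<forall>j\<in>I. x \<bullet> u j = 0}"
  have C: "subspace C"
    unfolding C_def subspace_def by (auto simp: inner_add_left)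
  have "card I < dim (UNIV :: 'a set)"
    using assms(4) by (simp add: dim_UNIV)
  then obtain y where "y \<noteq> 0" "\<And>j. j \<in> I \<Longrightarrow> y \<bullet> u j = 0"
    using subspace_orthogonal_to_orthonormal_on[OF assms(2,3) subspace_UNIV] by blast
  then have "y \<in> C" "y \<noteq> 0"
    unfolding C_def by auto
  then obtain w where w: "w \<in> C" "w \<bullet> w = 1"
    and wmax: "\<And>x. x \<in> C \<Longrightarrow> f x \<bullet> f x \<le> (f w \<bullet> f w) * (x \<bullet> x)"
    using rayleigh_max_exists[OF assms(1) C] by blast
  show ?thesis
  proof (rule that)
    show "w \<bullet> w = 1" "\<forall>j\<in>I. w \<bullet> u j = 0"
      using w unfolding C_def by simp_all
    show max: "\<And>x. \<forall>j\<in>I. x \<bullet> u j = 0 \<Longrightarrow> f x \<bullet> f x \<le> (f w \<bullet> f w) * (x \<bullet> x)"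
      using wmax unfolding C_def by simp
    show "adjoint f (f w) = (f w \<bullet> f w) *\<^sub>R w"
      using w(2) assms(5) by (intro rayleigh_max_eigenvector[OF assms(1-3) _ _ _ max]) (use w(1) C_def in auto)
  qed
qed

text \<open>The first \<open>k\<close> steps of the Rayleigh-Ritz construction: \<open>u i\<close> is an eigenvector of
  \<open>f\<^sup>* f\<close> whose eigenvalue \<open>l i\<close> is the maximum of \<open>|f x|\<^sup>2 / |x|\<^sup>2\<close> on the orthogonal
  complement of \<open>u 1, \<dots>, u (i - 1)\<close>.\<close>
definition rayleigh_eigenbasis ::
  "('a::euclidean_space \<Rightarrow> 'b::euclidean_space) \<Rightarrow> nat \<Rightarrow> (nat \<Rightarrow> 'a) \<Rightarrow> (nat \<Rightarrow> real) \<Rightarrow> bool" where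
  "rayleigh_eigenbasis f k u l \<longleftrightarrow> orthonormal_on {1..k} u \<and>
     (\<forall>i\<in>{1..k}. adjoint f (f (u i)) = l i *\<^sub>R u i) \<and>
     (\<forall>i\<in>{1..k}. \<forall>x. (\<forall>j\<in>{1..<i}. x \<bullet> u j = 0) \<longrightarrow> f x \<bullet> f x \<le> l i * (x \<bullet> x))"

lemma rayleigh_eigenbasis_exists:
  fixes f :: "'a::euclidean_space \<Rightarrow> 'b::euclidean_space"
  assumes "linear f"
  shows "k \<le> DIM('a) \<Longrightarrow> \<exists>u l. rayleigh_eigenbasis f k u l"
proof (induction k)
  case 0
  show ?case
    by (auto simp: rayleigh_eigenbasis_def orthonormal_on_def)
next
  case (Suc k)
  then obtain u l where ou: "orthonormal_on {1..k} u"
    and eig: "\<forall>i\<in>{1..k}. adjoint f (f (u i)) = l i *\<^sub>R u i"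
    and max: "\<forall>i\<in>{1..k}. \<forall>x. (\<forall>j\<in>{1..<i}. x \<bullet> u j = 0) \<longrightarrow> f x \<bullet> f x \<le> l i * (x \<bullet> x)"
    unfolding rayleigh_eigenbasis_def by auto
  have "card {1..k} < DIM('a)"
    using Suc.prems by simp
  then obtain w lam where w: "w \<bullet> w = 1" "\<forall>j\<in>{1..k}. w \<bullet> u j = 0" "adjoint f (f w) = lam *\<^sub>R w"
    and wmax: "\<And>x. \<forall>j\<in>{1..k}. x \<bullet> u j = 0 \<Longrightarrow> f x \<bullet> f x \<le> lam * (x \<bullet> x)"
    using rayleigh_max_on_complement[OF assms ou finite_atLeastAtMost _ eig] by blast
  have "f x \<bullet> f x \<le> (l(Suc k := lam)) i * (x \<bullet> x)"
    if "i \<in> {1..Suc k}" "\<forall>j\<in>{1..<i}. x \<bullet> (u(Suc k := w)) j = 0" for i x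
  proof (cases "i = Suc k")
    case True
    then show ?thesis
      using that(2) wmax by auto
  next
    case False
    then show ?thesis
      using that max by auto
  qed
  moreover have "orthonormal_on {1..Suc k} (u(Suc k := w))"
    using ou w unfolding orthonormal_on_def by (auto simp: atLeastAtMostSuc_conv inner_commute)
  ultimately have "rayleigh_eigenbasis f (Suc k) (u(Suc k := w)) (l(Suc k := lam))"
    using eig w(3) unfolding rayleigh_eigenbasis_def by (auto simp: atLeastAtMostSuc_conv)
  then show ?case
    by blast
qed

lemma rayleigh_eigenbasis_inner:
  fixes f :: "'a::euclidean_space \<Rightarrow> 'b::euclidean_space"
  assumes "linear f" "rayleigh_eigenbasis f k u l" "i \<in> {1..k}" "j \<in> {1..k}"
  shows "f (u i) \<bullet> f (u j) = (if i = j then l i else 0)"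
proof -
  have "f (u i) \<bullet> f (u j) = u i \<bullet> adjoint f (f (u j))"
    by (simp add: adjoint_clauses[OF assms(1)])
  then show ?thesis
    using assms(2-4) unfolding rayleigh_eigenbasis_def orthonormal_on_def by auto
qed

lemma rayleigh_eigenbasis_nonneg:
  fixes f :: "'a::euclidean_space \<Rightarrow> 'b::euclidean_space"
  assumes "linear f" "rayleigh_eigenbasis f k u l" "i \<in> {1..k}"
  shows "0 \<le> l i"
  using rayleigh_eigenbasis_inner[OF assms assms(3)] by (metis inner_ge_zero)

lemma rayleigh_eigenbasis_antimono:
  fixes f :: "'a::euclidean_space \<Rightarrow> 'b::euclidean_space"
  assumes "linear f" "rayleigh_eigenbasis f k u l" "i \<in> {1..k}" "j \<in> {1..k}" "i \<le> j"
  shows "l j \<le> l i"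
proof -
  have "\<forall>j'\<in>{1..<i}. u j \<bullet> u j' = 0" "u j \<bullet> u j = 1"
    using assms(2-5) unfolding rayleigh_eigenbasis_def orthonormal_on_def by auto
  then have "f (u j) \<bullet> f (u j) \<le> l i"
    using assms(2,3) unfolding rayleigh_eigenbasis_def by force
  then show ?thesis
    using rayleigh_eigenbasis_inner[OF assms(1,2,4,4)] by simp
qed

lemma rayleigh_eigenbasis_normalized_images:
  fixes f :: "'a::euclidean_space \<Rightarrow> 'b::euclidean_space"
  assumes "linear f" "rayleigh_eigenbasis f k u l"
  defines "e \<equiv> \<lambda>i. f (u i) /\<^sub>R sqrt (l i)"
  shows "orthonormal_on {i\<in>{1..k}. 0 < l i} e"
    and "\<And>i. i \<in> {1..k} \<Longrightarrow> 0 < l i \<Longrightarrow> adjoint f (e i) = sqrt (l i) *\<^sub>R u i"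
    and "\<And>i. i \<in> {1..k} \<Longrightarrow> \<not> 0 < l i \<Longrightarrow> f (u i) = 0"
proof -
  note inner = rayleigh_eigenbasis_inner[OF assms(1,2)]
  show "orthonormal_on {i\<in>{1..k}. 0 < l i} e"
    unfolding orthonormal_on_def e_def using inner by (auto simp: field_simps)
  fix i assume i: "i \<in> {1..k}"
  show "f (u i) = 0" if "\<not> 0 < l i"
    using inner[OF i i] rayleigh_eigenbasis_nonneg[OF assms(1,2) i] that by simp
  assume "0 < l i"
  have "adjoint f (e i) = (l i / sqrt (l i)) *\<^sub>R u i"
    using assms(2) i linear_scale[OF adjoint_linear[OF assms(1)]]
    unfolding e_def rayleigh_eigenbasis_def by (simp add: divide_inverse)
  then show "adjoint f (e i) = sqrt (l i) *\<^sub>R u i"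
    using \<open>0 < l i\<close> by (simp add: real_div_sqrt)
qed

lemma adjoint_image_cball_subset_ellipsoid:
  fixes f :: "'a::euclidean_space \<Rightarrow> 'b::euclidean_space"
  assumes "linear f" "rayleigh_eigenbasis f DIM('a) u l"
  shows "adjoint f ` cball 0 1 \<subseteq>
    {\<Sum>i\<in>{1..DIM('a)}. (c i * sqrt (l i)) *\<^sub>R u i | c. (\<Sum>i\<in>{1..DIM('a)}. (c i)\<^sup>2) \<le> 1}"
proof
  let ?I = "{1..DIM('a)}" and ?P = "{i\<in>{1..DIM('a)}. 0 < l i}"
  define e where "e i = f (u i) /\<^sub>R sqrt (l i)" for i
  note e = rayleigh_eigenbasis_normalized_images[OF assms, folded e_def]
  fix y assume "y \<in> adjoint f ` cball 0 1"
  then obtain x where x: "norm x \<le> 1" "y = adjoint f x"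
    by auto
  define c where "c i = (if 0 < l i then x \<bullet> e i else 0)" for i
  have "y \<bullet> u i = c i * sqrt (l i)" if "i \<in> ?I" for i
  proof -
    have "y \<bullet> u i = x \<bullet> f (u i)"
      using x(2) by (simp add: adjoint_clauses[OF assms(1)])
    then show ?thesis
      using e(3)[OF that] by (auto simp: c_def e_def)
  qed
  then have "(\<Sum>i\<in>?I. (y \<bullet> u i) *\<^sub>R u i) = (\<Sum>i\<in>?I. (c i * sqrt (l i)) *\<^sub>R u i)"
    by (intro sum.cong) simp_all
  moreover have "y = (\<Sum>i\<in>?I. (y \<bullet> u i) *\<^sub>R u i)"
    using assms(2) unfolding rayleigh_eigenbasis_def by (blast intro: orthonormal_on_expansion)
  ultimately have "y = (\<Sum>i\<in>?I. (c i * sqrt (l i)) *\<^sub>R u i)"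
    by simp
  moreover have "(\<Sum>i\<in>?I. (c i)\<^sup>2) \<le> 1"
  proof -
    have "(\<Sum>i\<in>?I. (c i)\<^sup>2) = (\<Sum>i\<in>?I. if 0 < l i then (x \<bullet> e i)\<^sup>2 else 0)"
      by (intro sum.cong) (auto simp: c_def)
    also have "\<dots> = (\<Sum>i\<in>?P. (x \<bullet> e i)\<^sup>2)"
      by (rule sum.inter_filter[symmetric]) simp
    also have "\<dots> \<le> x \<bullet> x"
      by (rule bessel_inequality[OF e(1)]) simp
    also have "\<dots> \<le> 1"
      using x(1) by (simp add: dot_square_norm power_le_one)
    finally show ?thesis .
  qed
  ultimately show "y \<in> {\<Sum>i\<in>?I. (c i * sqrt (l i)) *\<^sub>R u i | c. (\<Sum>i\<in>?I. (c i)\<^sup>2) \<le> 1}"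
    by auto
qed

lemma ellipsoid_subset_adjoint_image_cball:
  fixes f :: "'a::euclidean_space \<Rightarrow> 'b::euclidean_space"
  assumes "linear f" "rayleigh_eigenbasis f DIM('a) u l"
  shows "{\<Sum>i\<in>{1..DIM('a)}. (c i * sqrt (l i)) *\<^sub>R u i | c. (\<Sum>i\<in>{1..DIM('a)}. (c i)\<^sup>2) \<le> 1}
    \<subseteq> adjoint f ` cball 0 1"
proof
  let ?I = "{1..DIM('a)}" and ?P = "{i\<in>{1..DIM('a)}. 0 < l i}"
  define e where "e i = f (u i) /\<^sub>R sqrt (l i)" for i
  note e = rayleigh_eigenbasis_normalized_images[OF assms, folded e_def]
  fix y assume "y \<in> {\<Sum>i\<in>?I. (c i * sqrt (l i)) *\<^sub>R u i | c. (\<Sum>i\<in>?I. (c i)\<^sup>2) \<le> 1}"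
  then obtain c where c: "(\<Sum>i\<in>?I. (c i)\<^sup>2) \<le> 1" "y = (\<Sum>i\<in>?I. (c i * sqrt (l i)) *\<^sub>R u i)"
    by blast
  define x where "x = (\<Sum>i\<in>?P. c i *\<^sub>R e i)"
  have "(\<Sum>i\<in>?P. (c i)\<^sup>2) \<le> (\<Sum>i\<in>?I. (c i)\<^sup>2)"
    by (rule sum_mono2) auto
  then have "(\<Sum>i\<in>?P. (c i)\<^sup>2) \<le> 1"
    using c(1) by linarith
  then have "norm x \<le> 1"
    unfolding x_def using norm_sum_orthonormal_le[OF e(1)] by simp
  moreover have "adjoint f x = y"
  proof -
    have "adjoint f x = (\<Sum>i\<in>?P. (c i * sqrt (l i)) *\<^sub>R u i)"
      unfolding x_def using e(2) adjoint_linear[OF assms(1)]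
      by (simp add: linear_sum linear_scale)
    also have "\<dots> = y"
    proof -
      have "l i = 0" if "i \<in> ?I" "\<not> 0 < l i" for i
        using rayleigh_eigenbasis_nonneg[OF assms that(1)] that(2) by linarith
      then show ?thesis
        unfolding c(2) by (intro sum.mono_neutral_left) auto
    qed
    finally show ?thesis .
  qed
  ultimately show "y \<in> adjoint f ` cball 0 1"
    by auto
qed

lemma ellipsoid_rep_adjoint_image:
  fixes f :: "'a::euclidean_space \<Rightarrow> 'b::euclidean_space"
  assumes "linear f" "rayleigh_eigenbasis f DIM('a) u l"
  shows "ellipsoid_rep (adjoint f ` cball 0 1) (\<lambda>i. sqrt (l i)) u"
  unfolding ellipsoid_rep_def
proof (intro conjI)
  show "\<forall>i\<in>{1..DIM('a)}. \<forall>j\<in>{1..DIM('a)}. u i \<bullet> u j = (if i = j then 1 else 0)"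
    using assms(2) unfolding rayleigh_eigenbasis_def orthonormal_on_def by blast
  show "\<forall>i\<in>{1..DIM('a)}. \<forall>j\<in>{1..DIM('a)}. i \<le> j \<longrightarrow> sqrt (l j) \<le> sqrt (l i)"
    using rayleigh_eigenbasis_antimono[OF assms] by simp
  show "\<forall>i\<in>{1..DIM('a)}. 0 \<le> sqrt (l i)"
    using rayleigh_eigenbasis_nonneg[OF assms] by simp
  show "adjoint f ` cball 0 1 = {\<Sum>i\<in>{1..DIM('a)}. (c i * sqrt (l i)) *\<^sub>R u i |c. (\<Sum>i\<in>{1..DIM('a)}. (c i)\<^sup>2) \<le> 1}"
    using adjoint_image_cball_subset_ellipsoid[OF assms] ellipsoid_subset_adjoint_image_cball[OF assms]
    by (rule equalityI)
qed

lemma rayleigh_eigenbasis_norm_ge: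
  fixes f :: "'a::euclidean_space \<Rightarrow> 'b::euclidean_space"
  assumes "linear f" "rayleigh_eigenbasis f k u l" "p \<in> {1..k}" "x \<in> span (u ` {1..p})"
  shows "sqrt (l p) * norm x \<le> norm (f x)"
proof -
  have sub: "{1..p} \<subseteq> {1..k}"
    using assms(3) by auto
  have ou: "orthonormal_on {1..p} u"
    using assms(2) sub unfolding rayleigh_eigenbasis_def by (auto intro: orthonormal_on_subset)
  obtain a where a: "x = (\<Sum>i\<in>{1..p}. a i *\<^sub>R u i)"
    using span_orthonormal_on_repr[OF ou _ assms(4)] by auto
  have "f x = (\<Sum>i\<in>{1..p}. a i *\<^sub>R f (u i))"
    unfolding a using assms(1) by (simp add: linear_sum linear_scale)
  moreover have "(\<Sum>i\<in>{1..p}. a i *\<^sub>R f (u i)) \<bullet> (\<Sum>j\<in>{1..p}. a j *\<^sub>R f (u j))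
      = (\<Sum>i\<in>{1..p}. a i * a i * l i)"
    by (rule inner_sum_orthogonal_family)
      (use rayleigh_eigenbasis_inner[OF assms(1,2)] sub in \<open>auto simp: subset_iff\<close>)
  ultimately have "f x \<bullet> f x = (\<Sum>i\<in>{1..p}. a i * a i * l i)"
    by simp
  moreover have "x \<bullet> x = (\<Sum>i\<in>{1..p}. a i * a i)"
    unfolding a by (rule inner_sum_orthonormal[OF ou]) simp
  moreover have "(\<Sum>i\<in>{1..p}. a i * a i * l p) \<le> (\<Sum>i\<in>{1..p}. a i * a i * l i)"
    using rayleigh_eigenbasis_antimono[OF assms(1,2)] sub
    by (intro sum_mono mult_left_mono) (auto simp: subset_iff)
  ultimately have "l p * (x \<bullet> x) \<le> f x \<bullet> f x"
    by (simp add: sum_distrib_left mult_ac)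
  then have "(sqrt (l p) * norm x)\<^sup>2 \<le> (norm (f x))\<^sup>2"
    using rayleigh_eigenbasis_nonneg[OF assms(1-3)] by (simp add: power_mult_distrib dot_square_norm)
  then show ?thesis
    by (rule power2_le_imp_le) simp
qed

lemma rayleigh_eigenbasis_norm_le:
  fixes f :: "'a::euclidean_space \<Rightarrow> 'b::euclidean_space"
  assumes "linear f" "rayleigh_eigenbasis f k u l" "p \<in> {1..k}" "subspace W" "p \<le> dim W"
  obtains y where "y \<in> W" "norm y = 1" "norm (f y) \<le> sqrt (l p)"
proof -
  have "orthonormal_on {1..<p} u"
    using assms(2,3) unfolding rayleigh_eigenbasis_def by (auto intro: orthonormal_on_subset)
  moreover have "card {1..<p} < dim W"
    using assms(3,5) by auto
  ultimately obtain z where z: "z \<in> W" "z \<noteq> 0" "\<And>j. j \<in> {1..<p} \<Longrightarrow> z \<bullet> u j = 0"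
    using subspace_orthogonal_to_orthonormal_on[OF _ _ assms(4)] by blast
  define y where "y = z /\<^sub>R norm z"
  show ?thesis
  proof (rule that)
    show "y \<in> W" "norm y = 1"
      using z assms(4) unfolding y_def by (simp_all add: subspace_scale)
    have "\<forall>j\<in>{1..<p}. y \<bullet> u j = 0"
      using z(3) by (simp add: y_def)
    then have "f y \<bullet> f y \<le> l p * (y \<bullet> y)"
      using assms(2,3) unfolding rayleigh_eigenbasis_def by blast
    then show "norm (f y) \<le> sqrt (l p)"
      using \<open>norm y = 1\<close> unfolding norm_eq_sqrt_inner by (simp add: real_sqrt_le_mono)
  qed
qed

text \<open>\<open>s\<close> are the singular values of \<open>M\<close>; the last two conjuncts are the Courant-Fischer
  characterisation of \<open>s p\<close> as the largest value of \<open>min {|M\<^sup>* y| | y \<in> W, |y| = 1}\<close> over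
  \<open>p\<close>-dimensional subspaces \<open>W\<close>.\<close>
definition singular_system :: "('b::euclidean_space \<Rightarrow> 'a::euclidean_space) \<Rightarrow> (nat \<Rightarrow> real) \<Rightarrow> (nat \<Rightarrow> 'a) \<Rightarrow> bool" where
  "singular_system M s u \<longleftrightarrow> ellipsoid_rep (M ` cball 0 1) s u \<and>
     (\<forall>p\<in>{1..DIM('a)}. \<forall>x\<in>span (u ` {1..p}). s p * norm x \<le> norm (adjoint M x)) \<and>
     (\<forall>p\<in>{1..DIM('a)}. \<forall>W. subspace W \<and> p \<le> dim W \<longrightarrow> (\<exists>y\<in>W. norm y = 1 \<and> norm (adjoint M y) \<le> s p))"

lemma singular_system_exists:
  fixes M :: "'b::euclidean_space \<Rightarrow> 'a::euclidean_space"
  assumes "linear M"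
  obtains s u where "singular_system M s u"
proof -
  have lin: "linear (adjoint M)"
    by (rule adjoint_linear[OF assms])
  obtain u l where ul: "rayleigh_eigenbasis (adjoint M) DIM('a) u l"
    using rayleigh_eigenbasis_exists[OF lin order_refl] by blast
  have "singular_system M (\<lambda>i. sqrt (l i)) u"
    unfolding singular_system_def
    using ellipsoid_rep_adjoint_image[OF lin ul] rayleigh_eigenbasis_norm_ge[OF lin ul]
      rayleigh_eigenbasis_norm_le[OF lin ul] adjoint_adjoint[OF assms]
    by (metis (no_types))
  then show ?thesis
    by (rule that)
qed

lemma ellipsoid_rep_linear_image:
  fixes E :: "'a::euclidean_space set"
  assumes rep: "ellipsoid_rep E \<sigma> v"
  obtains A :: "'a \<Rightarrow> 'a" where "linear A" "E = A ` cball 0 1"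
proof -
  let ?I = "{1..DIM('a)}"
  define A where "A x = (\<Sum>i\<in>?I. (\<sigma> i * (v i \<bullet> x)) *\<^sub>R v i)" for x
  have ov: "orthonormal_on ?I v"
    using rep unfolding ellipsoid_rep_def orthonormal_on_def by auto
  have E: "E = {\<Sum>i\<in>?I. (c i * \<sigma> i) *\<^sub>R v i | c. (\<Sum>i\<in>?I. (c i)\<^sup>2) \<le> 1}"
    using rep unfolding ellipsoid_rep_def by auto
  have "linear A"
    unfolding A_def
    by (rule linearI) (simp_all add: inner_add_right scaleR_add_left sum.distrib scaleR_sum_right algebra_simps)
  moreover have "E = A ` cball 0 1"
  proof (intro equalityI subsetI)
    fix y assume "y \<in> E"
    then obtain c where c: "(\<Sum>i\<in>?I. (c i)\<^sup>2) \<le> 1" "y = (\<Sum>i\<in>?I. (c i * \<sigma> i) *\<^sub>R v i)"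
      unfolding E by auto
    define x where "x = (\<Sum>i\<in>?I. c i *\<^sub>R v i)"
    have "v i \<bullet> x = c i" if "i \<in> ?I" for i
      using inner_sum_orthonormal_left[OF ov _ that, of c] unfolding x_def by (simp add: inner_commute)
    then have "A x = y"
      unfolding A_def c(2) by (intro sum.cong) (auto simp: mult.commute)
    moreover have "norm x \<le> 1"
      unfolding x_def by (rule norm_sum_orthonormal_le[OF ov _ c(1)]) simp
    ultimately show "y \<in> A ` cball 0 1"
      by auto
  next
    fix y assume "y \<in> A ` cball 0 1"
    then obtain x where x: "norm x \<le> 1" "y = A x"
      by auto
    have "(\<Sum>i\<in>?I. (v i \<bullet> x)\<^sup>2) \<le> x \<bullet> x"
      using bessel_inequality[OF ov, of x] by (simp add: inner_commute)
    also have "\<dots> \<le> 1"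
      using x(1) by (simp add: dot_square_norm power_le_one)
    finally show "y \<in> E"
      unfolding E x(2) A_def by (auto simp: mult.commute)
  qed
  ultimately show ?thesis
    by (rule that)
qed

lemma adjoint_comp:
  fixes f :: "'b::euclidean_space \<Rightarrow> 'c::euclidean_space" and g :: "'a::euclidean_space \<Rightarrow> 'b"
  assumes "linear f" "linear g"
  shows "adjoint (f \<circ> g) = adjoint g \<circ> adjoint f"
  by (rule adjoint_unique) (simp add: adjoint_clauses[OF assms(1)] adjoint_clauses[OF assms(2)])

lemma singular_system_orthonormal_nonneg:
  assumes "singular_system M s u"
  shows "orthonormal_on {1..DIM('a)} (u :: nat \<Rightarrow> 'a::euclidean_space)" "\<And>p. p \<in> {1..DIM('a)} \<Longrightarrow> 0 \<le> s p"
  using assms unfolding singular_system_def ellipsoid_rep_def orthonormal_on_def by auto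

text \<open>Push the span of \<open>u2 1, \<dots>, u2 p\<close> forward along \<open>T\<close> and compare the two Courant-Fischer
  characterisations.\<close>
lemma singular_value_le_if_adjoint_factors:
  fixes M1 M2 :: "'b::euclidean_space \<Rightarrow> 'a::euclidean_space"
  assumes M1: "singular_system M1 s1 u1" and M2: "singular_system M2 s2 u2"
    and T: "linear T" "inj T" "\<And>x. adjoint M2 x = adjoint M1 (T x)" "\<And>x. t * norm (T x) \<le> norm x"
    and p: "p \<in> {1..DIM('a)}"
  shows "t * s2 p \<le> s1 p"
proof -
  define V where "V = span (u2 ` {1..p})"
  have "orthonormal_on {1..p} u2"
    using singular_system_orthonormal_nonneg(1)[OF M2] p by (auto intro: orthonormal_on_subset)
  then have "dim V = p"
    unfolding V_def by (simp add: dim_image_orthonormal_on)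
  moreover have "dim (T ` V) = dim V"
    using dim_image_eq[OF T(1)] T(2) by (auto intro: inj_on_subset)
  moreover have "subspace (T ` V)"
    unfolding V_def by (rule linear_subspace_image[OF T(1) subspace_span])
  moreover have "\<And>W. subspace W \<Longrightarrow> p \<le> dim W \<Longrightarrow> \<exists>y\<in>W. norm y = 1 \<and> norm (adjoint M1 y) \<le> s1 p"
    using M1 p unfolding singular_system_def by blast
  ultimately have "\<exists>y\<in>T ` V. norm y = 1 \<and> norm (adjoint M1 y) \<le> s1 p"
    by (metis order_refl)
  then obtain y where y: "y \<in> T ` V" "norm y = 1" "norm (adjoint M1 y) \<le> s1 p"
    by blast
  then obtain x where x: "x \<in> V" "y = T x"
    by auto
  have "s2 p * norm x \<le> norm (adjoint M2 x)"
    using M2 p x(1) unfolding singular_system_def V_def by blast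
  also have "\<dots> \<le> s1 p"
    using T(3) x(2) y(3) by simp
  finally have "s2 p * norm x \<le> s1 p" .
  moreover have "t \<le> norm x"
    using T(4)[of x] x(2) y(2) by simp
  then have "t * s2 p \<le> norm x * s2 p"
    using singular_system_orthonormal_nonneg(2)[OF M2 p] by (rule mult_right_mono)
  ultimately show ?thesis
    by (simp add: mult.commute)
qed

section \<open>Hilbert dilation systems\<close>

lemma hilbert_dilation_system_linear:
  "hilbert_dilation_system m Xs tau \<Longrightarrow> 0 < \<delta> \<Longrightarrow> linear (tau \<delta>)"
  unfolding hilbert_dilation_system_def by blast

lemma hilbert_dilation_system_decomp:
  fixes Xs :: "nat \<Rightarrow> 'a::euclidean_space set"
  assumes "hilbert_dilation_system m Xs tau"
  obtains xs where "\<forall>\<nu>\<in>{1..m}. xs \<nu> \<in> Xs \<nu>" "x = (\<Sum>\<nu>\<in>{1..m}. xs \<nu>)"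
proof -
  have sub: "\<forall>\<nu>\<in>{1..m}. subspace (Xs \<nu>)" and sp: "span (\<Union>\<nu>\<in>{1..m}. Xs \<nu>) = UNIV"
    using assms unfolding hilbert_dilation_system_def by auto
  define S where "S = {(\<Sum>\<nu>\<in>{1..m}. xs \<nu>) | xs. \<forall>\<nu>\<in>{1..m}. xs \<nu> \<in> Xs \<nu>}"
  have "subspace S"
    unfolding subspace_def
  proof (intro conjI ballI allI)
    show "0 \<in> S"
      unfolding S_def using sub by (auto intro!: exI[of _ "\<lambda>_. 0"] simp: subspace_0)
  next
    fix x y assume "x \<in> S" "y \<in> S"
    then obtain xs ys where "\<forall>\<nu>\<in>{1..m}. xs \<nu> \<in> Xs \<nu>" "x = (\<Sum>\<nu>\<in>{1..m}. xs \<nu>)"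
      "\<forall>\<nu>\<in>{1..m}. ys \<nu> \<in> Xs \<nu>" "y = (\<Sum>\<nu>\<in>{1..m}. ys \<nu>)"
      unfolding S_def by auto
    then show "x + y \<in> S"
      unfolding S_def using sub
      by (auto intro!: exI[of _ "\<lambda>\<nu>. xs \<nu> + ys \<nu>"] simp: sum.distrib subspace_add)
  next
    fix c :: real and x assume "x \<in> S"
    then obtain xs where "\<forall>\<nu>\<in>{1..m}. xs \<nu> \<in> Xs \<nu>" "x = (\<Sum>\<nu>\<in>{1..m}. xs \<nu>)"
      unfolding S_def by auto
    then show "c *\<^sub>R x \<in> S"
      unfolding S_def using sub
      by (auto intro!: exI[of _ "\<lambda>\<nu>. c *\<^sub>R xs \<nu>"] simp: scaleR_sum_right subspace_scale)
  qed
  moreover have "(\<Union>\<nu>\<in>{1..m}. Xs \<nu>) \<subseteq> S"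
  proof
    fix x assume "x \<in> (\<Union>\<nu>\<in>{1..m}. Xs \<nu>)"
    then obtain \<mu> where "\<mu> \<in> {1..m}" "x \<in> Xs \<mu>"
      by auto
    then show "x \<in> S"
      unfolding S_def using sub
      by (auto intro!: exI[of _ "\<lambda>\<nu>. if \<nu> = \<mu> then x else 0"] simp: subspace_0)
  qed
  ultimately have "x \<in> S"
    using span_minimal[of "\<Union>\<nu>\<in>{1..m}. Xs \<nu>" S] sp by auto
  then show ?thesis
    using that unfolding S_def by auto
qed

lemma hilbert_dilation_system_apply:
  assumes "hilbert_dilation_system m Xs tau" "0 < \<delta>" "\<forall>\<nu>\<in>{1..m}. xs \<nu> \<in> Xs \<nu>"
  shows "tau \<delta> (\<Sum>\<nu>\<in>{1..m}. xs \<nu>) = (\<Sum>\<nu>\<in>{1..m}. (1 / \<delta> ^ \<nu>) *\<^sub>R xs \<nu>)"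
  using assms unfolding hilbert_dilation_system_def by (simp add: linear_sum)

lemma hilbert_dilation_system_inner:
  fixes Xs :: "nat \<Rightarrow> 'a::euclidean_space set"
  assumes "hilbert_dilation_system m Xs tau"
    and xs: "\<forall>\<nu>\<in>{1..m}. xs \<nu> \<in> Xs \<nu>" and ys: "\<forall>\<nu>\<in>{1..m}. ys \<nu> \<in> Xs \<nu>"
  shows "(\<Sum>\<nu>\<in>{1..m}. a \<nu> *\<^sub>R xs \<nu>) \<bullet> (\<Sum>\<mu>\<in>{1..m}. b \<mu> *\<^sub>R ys \<mu>)
    = (\<Sum>\<nu>\<in>{1..m}. a \<nu> * b \<nu> * (xs \<nu> \<bullet> ys \<nu>))"
proof -
  have orth: "\<forall>\<nu>\<in>{1..m}. \<forall>\<mu>\<in>{1..m}. \<nu> \<noteq> \<mu> \<longrightarrow> (\<forall>x\<in>Xs \<nu>. \<forall>y\<in>Xs \<mu>. x \<bullet> y = 0)"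
    using assms unfolding hilbert_dilation_system_def by auto
  have "(\<Sum>\<nu>\<in>{1..m}. a \<nu> *\<^sub>R xs \<nu>) \<bullet> (\<Sum>\<mu>\<in>{1..m}. b \<mu> *\<^sub>R ys \<mu>)
      = (\<Sum>\<nu>\<in>{1..m}. \<Sum>\<mu>\<in>{1..m}. a \<nu> * b \<mu> * (xs \<nu> \<bullet> ys \<mu>))"
    unfolding inner_sum_left inner_sum_right by (subst sum.swap) (simp add: mult_ac)
  also have "\<dots> = (\<Sum>\<nu>\<in>{1..m}. \<Sum>\<mu>\<in>{1..m}. if \<mu> = \<nu> then a \<nu> * b \<nu> * (xs \<nu> \<bullet> ys \<nu>) else 0)"
    using orth xs ys by (intro sum.cong refl) auto
  finally show ?thesis
    by (simp add: sum.delta)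
qed

lemma hilbert_dilation_system_self_adjoint:
  fixes Xs :: "nat \<Rightarrow> 'a::euclidean_space set"
  assumes H: "hilbert_dilation_system m Xs tau" and "0 < \<delta>"
  shows "adjoint (tau \<delta>) = tau \<delta>"
proof (rule adjoint_unique, intro allI)
  fix x y
  obtain xs where xs: "\<forall>\<nu>\<in>{1..m}. xs \<nu> \<in> Xs \<nu>" "x = (\<Sum>\<nu>\<in>{1..m}. xs \<nu>)"
    using hilbert_dilation_system_decomp[OF H] by blast
  obtain ys where ys: "\<forall>\<nu>\<in>{1..m}. ys \<nu> \<in> Xs \<nu>" "y = (\<Sum>\<nu>\<in>{1..m}. ys \<nu>)"
    using hilbert_dilation_system_decomp[OF H] by blast
  have "tau \<delta> x \<bullet> y = (\<Sum>\<nu>\<in>{1..m}. (1 / \<delta> ^ \<nu>) *\<^sub>R xs \<nu>) \<bullet> (\<Sum>\<mu>\<in>{1..m}. 1 *\<^sub>R ys \<mu>)"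
    using hilbert_dilation_system_apply[OF H \<open>0 < \<delta>\<close> xs(1)] xs(2) ys(2) by simp
  also have "\<dots> = (\<Sum>\<nu>\<in>{1..m}. (1 / \<delta> ^ \<nu>) * 1 * (xs \<nu> \<bullet> ys \<nu>))"
    by (rule hilbert_dilation_system_inner[OF H xs(1) ys(1)])
  also have "\<dots> = (\<Sum>\<nu>\<in>{1..m}. 1 * (1 / \<delta> ^ \<nu>) * (xs \<nu> \<bullet> ys \<nu>))"
    by simp
  also have "\<dots> = (\<Sum>\<nu>\<in>{1..m}. 1 *\<^sub>R xs \<nu>) \<bullet> (\<Sum>\<mu>\<in>{1..m}. (1 / \<delta> ^ \<mu>) *\<^sub>R ys \<mu>)"
    by (rule hilbert_dilation_system_inner[OF H xs(1) ys(1), symmetric])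
  also have "\<dots> = x \<bullet> tau \<delta> y"
    using hilbert_dilation_system_apply[OF H \<open>0 < \<delta>\<close> ys(1)] xs(2) ys(2) by simp
  finally show "tau \<delta> x \<bullet> y = x \<bullet> tau \<delta> y" .
qed

lemma hilbert_dilation_system_mult:
  fixes Xs :: "nat \<Rightarrow> 'a::euclidean_space set"
  assumes H: "hilbert_dilation_system m Xs tau" and "0 < a" "0 < b"
  shows "tau a (tau b x) = tau (a * b) x"
proof -
  obtain xs where xs: "\<forall>\<nu>\<in>{1..m}. xs \<nu> \<in> Xs \<nu>" "x = (\<Sum>\<nu>\<in>{1..m}. xs \<nu>)"
    using hilbert_dilation_system_decomp[OF H] by blast
  have "\<forall>\<nu>\<in>{1..m}. (1 / b ^ \<nu>) *\<^sub>R xs \<nu> \<in> Xs \<nu>"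
    using xs(1) H unfolding hilbert_dilation_system_def by (simp add: subspace_scale)
  then have "tau a (tau b x) = (\<Sum>\<nu>\<in>{1..m}. (1 / a ^ \<nu>) *\<^sub>R ((1 / b ^ \<nu>) *\<^sub>R xs \<nu>))"
    using hilbert_dilation_system_apply[OF H] xs assms(2,3) by simp
  also have "\<dots> = (\<Sum>\<nu>\<in>{1..m}. (1 / (a * b) ^ \<nu>) *\<^sub>R xs \<nu>)"
    by (simp add: power_mult_distrib)
  also have "\<dots> = tau (a * b) x"
    using hilbert_dilation_system_apply[OF H _ xs(1), of "a * b"] assms(2,3) xs(2) by simp
  finally show ?thesis .
qed

lemma hilbert_dilation_system_one:
  fixes Xs :: "nat \<Rightarrow> 'a::euclidean_space set"
  assumes H: "hilbert_dilation_system m Xs tau"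
  shows "tau 1 x = x"
proof -
  obtain xs where xs: "\<forall>\<nu>\<in>{1..m}. xs \<nu> \<in> Xs \<nu>" "x = (\<Sum>\<nu>\<in>{1..m}. xs \<nu>)"
    using hilbert_dilation_system_decomp[OF H] by blast
  show ?thesis
    using hilbert_dilation_system_apply[OF H _ xs(1), of 1] xs(2) by simp
qed

lemma hilbert_dilation_system_contracts:
  fixes Xs :: "nat \<Rightarrow> 'a::euclidean_space set"
  assumes H: "hilbert_dilation_system m Xs tau" and t: "1 \<le> t"
  shows "t * norm (tau t x) \<le> norm x"
proof -
  obtain xs where xs: "\<forall>\<nu>\<in>{1..m}. xs \<nu> \<in> Xs \<nu>" "x = (\<Sum>\<nu>\<in>{1..m}. xs \<nu>)"
    using hilbert_dilation_system_decomp[OF H] by blast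
  have "tau t x = (\<Sum>\<nu>\<in>{1..m}. (1 / t ^ \<nu>) *\<^sub>R xs \<nu>)"
    using hilbert_dilation_system_apply[OF H _ xs(1), of t] t xs(2) by simp
  then have "tau t x \<bullet> tau t x = (\<Sum>\<nu>\<in>{1..m}. (1 / t ^ \<nu>) * (1 / t ^ \<nu>) * (xs \<nu> \<bullet> xs \<nu>))"
    using hilbert_dilation_system_inner[OF H xs(1) xs(1)] by simp
  also have "\<dots> \<le> (\<Sum>\<nu>\<in>{1..m}. (1 / t) * (1 / t) * (xs \<nu> \<bullet> xs \<nu>))"
  proof (intro sum_mono mult_right_mono)
    fix \<nu> assume "\<nu> \<in> {1..m}"
    then have "t ^ 1 \<le> t ^ \<nu>"
      using t by (intro power_increasing) auto
    then have "1 / t ^ \<nu> \<le> 1 / t"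
      using t by (intro divide_left_mono) auto
    then show "1 / t ^ \<nu> * (1 / t ^ \<nu>) \<le> 1 / t * (1 / t)"
      using t by (intro mult_mono) auto
  qed simp
  also have "\<dots> = (1 / t) * (1 / t) * (\<Sum>\<nu>\<in>{1..m}. 1 * 1 * (xs \<nu> \<bullet> xs \<nu>))"
    by (simp add: sum_distrib_left)
  also have "\<dots> = (1 / t) * (1 / t) * ((\<Sum>\<nu>\<in>{1..m}. 1 *\<^sub>R xs \<nu>) \<bullet> (\<Sum>\<mu>\<in>{1..m}. 1 *\<^sub>R xs \<mu>))"
    by (simp only: hilbert_dilation_system_inner[OF H xs(1) xs(1)])
  also have "\<dots> = (norm x / t)\<^sup>2"
    using xs(2) by (simp add: dot_square_norm power_divide power2_eq_square)
  finally have "(norm (tau t x))\<^sup>2 \<le> (norm x / t)\<^sup>2"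
    by (simp add: dot_square_norm)
  then have "norm (tau t x) \<le> norm x / t"
    by (rule power2_le_imp_le) (use t in simp)
  then show ?thesis
    using t by (simp add: field_simps)
qed

lemma singular_value_dilation_decay:
  fixes Xs :: "nat \<Rightarrow> 'a::euclidean_space set" and A :: "'b::euclidean_space \<Rightarrow> 'a"
  assumes H: "hilbert_dilation_system m Xs tau" and A: "linear A"
    and \<delta>: "0 < \<delta>\<^sub>1" "\<delta>\<^sub>1 \<le> \<delta>\<^sub>2"
    and "singular_system (tau \<delta>\<^sub>1 \<circ> A) s\<^sub>1 u\<^sub>1" "singular_system (tau \<delta>\<^sub>2 \<circ> A) s\<^sub>2 u\<^sub>2"
    and "p \<in> {1..DIM('a)}"
  shows "s\<^sub>2 p \<le> \<delta>\<^sub>1 / \<delta>\<^sub>2 * s\<^sub>1 p"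
proof -
  define t where "t = \<delta>\<^sub>2 / \<delta>\<^sub>1"
  have t: "1 \<le> t" "0 < t" "\<delta>\<^sub>1 * t = \<delta>\<^sub>2"
    unfolding t_def using \<delta> by auto
  note lin = hilbert_dilation_system_linear[OF H]
  have adj: "adjoint (tau \<delta> \<circ> A) = adjoint A \<circ> tau \<delta>" if "0 < \<delta>" for \<delta>
    using adjoint_comp[OF lin[OF that] A] hilbert_dilation_system_self_adjoint[OF H that] by simp
  have "t * s\<^sub>2 p \<le> s\<^sub>1 p"
  proof (rule singular_value_le_if_adjoint_factors[OF assms(5,6) lin[OF t(2)] _ _ _ assms(7)])
    show "inj (tau t)"
    proof (rule inj_on_inverseI)
      show "tau (1 / t) (tau t x) = x" for x
        using hilbert_dilation_system_mult[OF H _ t(2), of "1 / t" x] hilbert_dilation_system_one[OF H] t(2)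
        by simp
    qed
    show "adjoint (tau \<delta>\<^sub>2 \<circ> A) x = adjoint (tau \<delta>\<^sub>1 \<circ> A) (tau t x)" for x
      using adj \<delta> t hilbert_dilation_system_mult[OF H \<delta>(1) t(2)] by simp
    show "t * norm (tau t x) \<le> norm x" for x
      by (rule hilbert_dilation_system_contracts[OF H t(1)])
  qed
  then show ?thesis
    using \<delta> t by (simp add: t_def field_simps)
qed

lemma dilation_singular_systems:
  fixes Xs :: "nat \<Rightarrow> 'a::euclidean_space set" and A :: "'b::euclidean_space \<Rightarrow> 'a"
  assumes H: "hilbert_dilation_system m Xs tau" and A: "linear A"
  obtains s u where "\<And>\<delta>. 0 < \<delta> \<Longrightarrow> singular_system (tau \<delta> \<circ> A) (s \<delta>) (u \<delta>)"
    and "\<And>p a b. p \<in> {1..DIM('a)} \<Longrightarrow> 0 < a \<Longrightarrow> a \<le> b \<Longrightarrow> s b p \<le> a / b * s a p"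
proof -
  have "\<exists>s u. singular_system (tau \<delta> \<circ> A) s u" if "0 < \<delta>" for \<delta>
    using singular_system_exists[OF linear_compose[OF A hilbert_dilation_system_linear[OF H that]]]
    by blast
  then obtain s u where su: "\<And>\<delta>. 0 < \<delta> \<Longrightarrow> singular_system (tau \<delta> \<circ> A) (s \<delta>) (u \<delta>)"
    by metis
  moreover have "s b p \<le> a / b * s a p" if "p \<in> {1..DIM('a)}" "0 < a" "a \<le> b" for p a b
    using singular_value_dilation_decay[OF H A that(2,3) su su that(1)] that by simp
  ultimately show ?thesis
    by (rule that)
qed

section \<open>Level sets of decaying functions\<close>

lemma level_set_ratio_le:
  fixes f :: "real \<Rightarrow> real" and \<epsilon> :: real
  assumes "0 < \<epsilon>" "\<epsilon> \<le> 1" and decay: "\<And>a b. 0 < a \<Longrightarrow> a \<le> b \<Longrightarrow> f b \<le> a / b * f a"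
    and "0 < a" "f a \<in> {\<epsilon>..1/\<epsilon>}" "0 < b" "f b \<in> {\<epsilon>..1/\<epsilon>}"
  shows "b \<le> a / \<epsilon>\<^sup>2"
proof (cases "a \<le> b")
  case True
  have "\<epsilon> \<le> f b"
    using assms(7) by simp
  also have "\<dots> \<le> a / b * f a"
    by (rule decay[OF \<open>0 < a\<close> True])
  also have "\<dots> \<le> a / b * (1 / \<epsilon>)"
    using assms(4-6) by (intro mult_left_mono) auto
  finally have "\<epsilon> \<le> a / b * (1 / \<epsilon>)" .
  then show ?thesis
    using assms(1,6) by (simp add: field_simps power2_eq_square)
next
  case False
  have "a \<le> a / \<epsilon>\<^sup>2"
    using assms(1,2,4) by (simp add: field_simps power_le_one)
  then show ?thesis
    using False by simp
qed

lemma level_set_in_short_interval: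
  fixes f :: "real \<Rightarrow> real" and \<epsilon> :: real
  assumes "0 < \<epsilon>" "\<epsilon> \<le> 1" "\<And>a b. 0 < a \<Longrightarrow> a \<le> b \<Longrightarrow> f b \<le> a / b * f a"
  obtains l r where "0 < l" "l \<le> r" "r / l \<le> 1 / \<epsilon>\<^sup>2" "{\<delta>. 0 < \<delta> \<and> f \<delta> \<in> {\<epsilon>..1/\<epsilon>}} \<subseteq> {l..r}"
proof (cases "{\<delta>. 0 < \<delta> \<and> f \<delta> \<in> {\<epsilon>..1/\<epsilon>}} = {}")
  case True
  show ?thesis
    by (rule that[of 1 1]) (use True assms(1,2) in \<open>auto simp: power_le_one\<close>)
next
  case False
  define I where "I = {\<delta>. 0 < \<delta> \<and> f \<delta> \<in> {\<epsilon>..1/\<epsilon>}}"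
  have ratio: "b \<le> a / \<epsilon>\<^sup>2" if "a \<in> I" "b \<in> I" for a b
    using level_set_ratio_le[OF assms] that unfolding I_def by blast
  obtain a0 where a0: "a0 \<in> I"
    using False unfolding I_def by blast
  have e2: "0 < \<epsilon>\<^sup>2"
    using assms(1) by simp
  have bdd: "bdd_above I" "bdd_below I"
    using ratio[OF a0] unfolding I_def by (auto intro: bdd_aboveI[of _ "a0 / \<epsilon>\<^sup>2"] bdd_belowI[of _ 0])
  have "Sup I \<le> b / \<epsilon>\<^sup>2" if "b \<in> I" for b
    using ratio[OF that] a0 by (intro cSup_least) auto
  then have sup_inf: "Sup I * \<epsilon>\<^sup>2 \<le> Inf I"
    using a0 e2 by (intro cInf_greatest) (auto simp: field_simps)
  have "a0 * \<epsilon>\<^sup>2 \<le> Inf I"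
    using a0 e2 ratio[OF _ a0] by (intro cInf_greatest) (auto simp: field_simps)
  moreover have "0 < a0 * \<epsilon>\<^sup>2"
    using a0 e2 unfolding I_def by simp
  ultimately have inf_pos: "0 < Inf I"
    by linarith
  have "Inf I \<le> a0" "a0 \<le> Sup I"
    using a0 bdd by (auto intro: cInf_lower cSup_upper)
  show ?thesis
  proof (rule that[of "Inf I" "Sup I"])
    show "0 < Inf I" "Inf I \<le> Sup I"
      using inf_pos \<open>Inf I \<le> a0\<close> \<open>a0 \<le> Sup I\<close> by simp_all
    show "Sup I / Inf I \<le> 1 / \<epsilon>\<^sup>2"
      using sup_inf inf_pos e2 by (simp add: field_simps)
    show "{\<delta>. 0 < \<delta> \<and> f \<delta> \<in> {\<epsilon>..1/\<epsilon>}} \<subseteq> {Inf I..Sup I}"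
      using bdd unfolding I_def[symmetric] by (auto intro: cInf_lower cSup_upper)
  qed
qed

lemma level_sets_in_short_intervals:
  fixes g :: "'i \<Rightarrow> real \<Rightarrow> real" and \<epsilon> :: real
  assumes "0 < \<epsilon>" "\<epsilon> \<le> 1" "\<And>p a b. p \<in> P \<Longrightarrow> 0 < a \<Longrightarrow> a \<le> b \<Longrightarrow> g p b \<le> a / b * g p a"
  obtains l r where "\<forall>p\<in>P. 0 < l p \<and> l p \<le> r p \<and> r p / l p \<le> 1 / \<epsilon>\<^sup>2"
    and "\<And>p \<delta>. p \<in> P \<Longrightarrow> 0 < \<delta> \<Longrightarrow> g p \<delta> \<in> {\<epsilon>..1/\<epsilon>} \<Longrightarrow> \<delta> \<in> {l p..r p}"
proof -
  have "\<exists>l r. 0 < l \<and> l \<le> r \<and> r / l \<le> 1 / \<epsilon>\<^sup>2 \<and> {\<delta>. 0 < \<delta> \<and> g p \<delta> \<in> {\<epsilon>..1/\<epsilon>}} \<subseteq> {l..r}"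
    if p: "p \<in> P" for p
  proof -
    obtain l r where "0 < l" "l \<le> r" "r / l \<le> 1 / \<epsilon>\<^sup>2" "{\<delta>. 0 < \<delta> \<and> g p \<delta> \<in> {\<epsilon>..1/\<epsilon>}} \<subseteq> {l..r}"
      by (rule level_set_in_short_interval[OF assms(1,2) assms(3)[OF p]])
    then show ?thesis
      by blast
  qed
  then have ex_l: "\<forall>p\<in>P. \<exists>l r. 0 < l \<and> l \<le> r \<and> r / l \<le> 1 / \<epsilon>\<^sup>2 \<and>
      {\<delta>. 0 < \<delta> \<and> g p \<delta> \<in> {\<epsilon>..1/\<epsilon>}} \<subseteq> {l..r}"
    by blast
  obtain l where ex_r: "\<forall>p\<in>P. \<exists>r. 0 < l p \<and> l p \<le> r \<and> r / l p \<le> 1 / \<epsilon>\<^sup>2 \<and>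
      {\<delta>. 0 < \<delta> \<and> g p \<delta> \<in> {\<epsilon>..1/\<epsilon>}} \<subseteq> {l p..r}"
    using bchoice[OF ex_l] by blast
  obtain r where "\<forall>p\<in>P. 0 < l p \<and> l p \<le> r p \<and> r p / l p \<le> 1 / \<epsilon>\<^sup>2 \<and>
      {\<delta>. 0 < \<delta> \<and> g p \<delta> \<in> {\<epsilon>..1/\<epsilon>}} \<subseteq> {l p..r p}"
    using bchoice[OF ex_r] by blast
  then show ?thesis
    by (intro that[of l r]) blast+
qed

theorem lemma4p9:
  fixes m :: nat and Xs :: "nat \<Rightarrow> 'a::euclidean_space set"
    and tau :: "real \<Rightarrow> 'a \<Rightarrow> 'a" and E :: "'a set" and \<epsilon> :: real
  assumes "hilbert_dilation_system m Xs tau"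
    and "ellipsoid E"
    and "0 < \<epsilon>" and "\<epsilon> < 1/2"
  shows "\<exists>l r :: nat \<Rightarrow> real.
           (\<forall>p\<in>{1..DIM('a)}. 0 < l p \<and> l p \<le> r p \<and> r p / l p \<le> 1 / \<epsilon>\<^sup>2) \<and>
           (\<forall>\<delta>>0. \<delta> \<notin> (\<Union>p\<in>{1..DIM('a)}. {l p..r p}) \<longrightarrow> eps_degenerate \<epsilon> (tau \<delta> ` E))"
proof -
  obtain \<sigma> v where "ellipsoid_rep E \<sigma> v"
    using assms(2) unfolding ellipsoid_def by blast
  then obtain A :: "'a \<Rightarrow> 'a" where A: "linear A" "E = A ` cball 0 1"
    by (rule ellipsoid_rep_linear_image)
  obtain s u where su: "\<And>\<delta>. 0 < \<delta> \<Longrightarrow> singular_system (tau \<delta> \<circ> A) (s \<delta>) (u \<delta>)"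
    and decay: "\<And>p a b. p \<in> {1..DIM('a)} \<Longrightarrow> 0 < a \<Longrightarrow> a \<le> b \<Longrightarrow> s b p \<le> a / b * s a p"
    using dilation_singular_systems[OF assms(1) A(1)] by blast
  obtain l r where lr: "\<forall>p\<in>{1..DIM('a)}. 0 < l p \<and> l p \<le> r p \<and> r p / l p \<le> 1 / \<epsilon>\<^sup>2"
    and cover: "\<And>p \<delta>. p \<in> {1..DIM('a)} \<Longrightarrow> 0 < \<delta> \<Longrightarrow> s \<delta> p \<in> {\<epsilon>..1/\<epsilon>} \<Longrightarrow> \<delta> \<in> {l p..r p}"
    by (rule level_sets_in_short_intervals[of \<epsilon> "{1..DIM('a)}" "\<lambda>p \<delta>. s \<delta> p", OF assms(3) _ decay])
      (use assms(4) in simp_all)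
  have "eps_degenerate \<epsilon> (tau \<delta> ` E)" if "0 < \<delta>" "\<delta> \<notin> (\<Union>p\<in>{1..DIM('a)}. {l p..r p})" for \<delta>
    unfolding eps_degenerate_def
  proof (intro exI conjI ballI)
    show "ellipsoid_rep (tau \<delta> ` E) (s \<delta>) (u \<delta>)"
      using su[OF that(1)] unfolding singular_system_def A(2) by (simp add: image_comp)
    show "s \<delta> p \<notin> {\<epsilon>..1/\<epsilon>}" if "p \<in> {1..DIM('a)}" for p
      using cover[OF that \<open>0 < \<delta>\<close>] that \<open>\<delta> \<notin> _\<close> by blast
  qed
  then show ?thesis
    using lr by blast
qed

end
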